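(* Let $M=[a_{ij},b_{ij}]_{i=1,\dots,n;\,j=1,\dots,m}$ and $\widehat M=[\hat a_{ij},\hat b_{ij}]_{i=1,\dots,n;\,j=1,\dots,m}$ be 2-person normal form game matrices of dimensions $n\times m$, and put $c_{ij}=\hat a_{ij}-a_{ij}$, $d_{ij}=\hat b_{ij}-b_{ij}$. Then $\widehat M$ can be obtained from $M$ by an OI-transformation if and only if both (C1) $a_{ij}+b_{ij}=\hat a_{ij}+\hat b_{ij}$ (equivalently $d_{ij}=-c_{ij}$) for all $i\le n$, $j\le m$; and (C2) $c_{ij}+c_{(i+1)(j+1)}=c_{i(j+1)}+c_{(i+1)j}$ for all $i\le n-1$, $j\le m-1$.
   Context: A 2-person normal form game matrix of dimensions $n\times m$ is $M=[a_{ij},b_{ij}]_{i\le n,\,j\le m}$, where $(a_{ij},b_{ij})\in\mathbb{R}^2$ are the payoffs of the row player $A$ and column player $B$ when $A$ plays strategy $A_i$ and $B$ plays $B_j$. A preplay offer by $A$ to $B$ of amount $\delta\ge 0$ contingent on $B_j$ replaces $(a_{ij},b_{ij})$ by $(a_{ij}-\delta,b_{ij}+\delta)$ for every $i$ (other entries unchanged); a preplay offer by $B$ to $A$ of amount $\delta\ge0$ contingent on $A_i$ replaces $(a_{ij},b_{ij})$ by $(a_{ij}+\delta,b_{ij}-\delta)$ for every $j$. Each such map is a POI-transformation; an OI-transformation is a composition of finitely many POI-transformations (all amounts non-negative). $\widehat M$ "can be obtained from $M$ by an OI-transformation" means $\widehat M=\tau(M)$ for some OI-transformation $\tau$. *)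

theory Defs
  imports Main "HOL-Library.Library"
begin

text \<open>A 2-person game matrix of dimensions n x m: entry (i,j) for i < n, j < m
  (0-based indices) is the payoff pair (a_ij, b_ij). Values outside the box are irrelevant.\<close>
type_synonym game = "nat \<Rightarrow> nat \<Rightarrow> real \<times> real"

text \<open>Preplay offer by A to B of amount d contingent on column j.\<close>
definition poiA :: "nat \<Rightarrow> real \<Rightarrow> game \<Rightarrow> game" where
  "poiA j d M = (\<lambda>i k. if k = j then (fst (M i k) - d, snd (M i k) + d) else M i k)"

text \<open>Preplay offer by B to A of amount d contingent on row i.\<close>
definition poiB :: "nat \<Rightarrow> real \<Rightarrow> game \<Rightarrow> game" where
  "poiB i d M = (\<lambda>k j. if k = i then (fst (M k j) + d, snd (M k j) - d) else M k j)"

inductive_set oi_trans :: "nat \<Rightarrow> nat \<Rightarrow> (game \<Rightarrow> game) set" for n m where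
  oi_id: "id \<in> oi_trans n m"
| oi_A: "\<tau> \<in> oi_trans n m \<Longrightarrow> j < m \<Longrightarrow> d \<ge> 0 \<Longrightarrow> poiA j d \<circ> \<tau> \<in> oi_trans n m"
| oi_B: "\<tau> \<in> oi_trans n m \<Longrightarrow> i < n \<Longrightarrow> d \<ge> 0 \<Longrightarrow> poiB i d \<circ> \<tau> \<in> oi_trans n m"

definition obtainable_by_OI :: "nat \<Rightarrow> nat \<Rightarrow> game \<Rightarrow> game \<Rightarrow> bool" where
  "obtainable_by_OI n m M M' \<longleftrightarrow>
     (\<exists>\<tau> \<in> oi_trans n m. \<forall>i<n. \<forall>j<m. \<tau> M i j = M' i j)"

end

theory Submission
  imports Defs
begin

(* Every POI-transformation moves an amount d between the two players
   uniformly along one row or one column, so a composition of them acts as a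
   "shift": player A gains x i - y j in cell (i,j) and player B loses the same,
   for some row transfers x and column transfers y.  Conversely, every shift with
   nonnegative transfers on the n x m box is realised by an OI-transformation
   (apply poiB row by row, then poiA column by column), and adding the same
   constant to all x i and y j does not change a shift, so nonnegativity is no
   restriction.  Hence Mh is obtainable from M iff Mh is a shift of M on the box.
   Finally, Mh - M on the box has the form (x i - y j, y j - x i) iff the sums
   a + b agree (C1) and the first components c have vanishing mixed differences
   (C2); the latter makes c separable: c i j = c i 0 + c 0 j - c 0 0. *)

definition shift_game :: "(nat \<Rightarrow> real) \<Rightarrow> (nat \<Rightarrow> real) \<Rightarrow> game \<Rightarrow> game" where
  "shift_game x y M = (\<lambda>i j. (fst (M i j) + x i - y j, snd (M i j) - x i + y j))"

lemma poiB_eq_shift: "poiB i d = shift_game (\<lambda>k. if k = i then d else 0) (\<lambda>_. 0)"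
  by (auto simp: poiB_def shift_game_def fun_eq_iff)

lemma poiA_eq_shift: "poiA j d = shift_game (\<lambda>_. 0) (\<lambda>k. if k = j then d else 0)"
  by (auto simp: poiA_def shift_game_def fun_eq_iff)

lemma shift_game_comp:
  "shift_game x y \<circ> shift_game x' y' = shift_game (\<lambda>i. x i + x' i) (\<lambda>j. y j + y' j)"
  by (auto simp: shift_game_def fun_eq_iff)

text \<open>Adding one constant to all row and column transfers does not change a shift;
  this is what allows us to make the transfers nonnegative.\<close>
lemma shift_game_add_const:
  "shift_game (\<lambda>i. x i + K) (\<lambda>j. y j + K) = shift_game x y"
  by (auto simp: shift_game_def fun_eq_iff)

lemma oi_trans_is_shift:
  assumes "\<tau> \<in> oi_trans n m"
  shows "\<exists>x y. \<tau> = shift_game x y"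
  using assms
proof induction
  case oi_id
  have "shift_game (\<lambda>_. 0) (\<lambda>_. 0) = id"
    by (auto simp: shift_game_def fun_eq_iff)
  then show ?case by metis
next
  case (oi_A \<tau> j d)
  then obtain x y where "\<tau> = shift_game x y" by blast
  then show ?case by (auto simp: poiA_eq_shift shift_game_comp)
next
  case (oi_B \<tau> i d)
  then obtain x y where "\<tau> = shift_game x y" by blast
  then show ?case by (auto simp: poiB_eq_shift shift_game_comp)
qed

lemma oi_trans_rows:
  assumes "\<tau> \<in> oi_trans n m" "\<forall>i<n. x i \<ge> 0" "k \<le> n"
  shows "shift_game (\<lambda>i. if i < k then x i else 0) (\<lambda>_. 0) \<circ> \<tau> \<in> oi_trans n m"
  using assms(3)
proof (induction k)
  case 0
  have "shift_game (\<lambda>_. 0) (\<lambda>_. 0) \<circ> \<tau> = \<tau>"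
    by (auto simp: shift_game_def fun_eq_iff)
  then show ?case using assms(1) by simp
next
  case (Suc k)
  have step: "poiB k (x k) \<circ> (shift_game (\<lambda>i. if i < k then x i else 0) (\<lambda>_. 0) \<circ> \<tau>)
        \<in> oi_trans n m"
    using Suc.prems assms(2) by (intro oi_trans.oi_B Suc.IH) auto
  have extend: "poiB k (x k) \<circ> shift_game (\<lambda>i. if i < k then x i else 0) (\<lambda>_. 0)
        = shift_game (\<lambda>i. if i < Suc k then x i else 0) (\<lambda>_. 0)"
    by (auto simp: poiB_eq_shift shift_game_def fun_eq_iff less_Suc_eq)
  show ?case using step unfolding extend[symmetric] comp_assoc .
qed

lemma oi_trans_cols:
  assumes "\<tau> \<in> oi_trans n m" "\<forall>j<m. y j \<ge> 0" "k \<le> m"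
  shows "shift_game (\<lambda>_. 0) (\<lambda>j. if j < k then y j else 0) \<circ> \<tau> \<in> oi_trans n m"
  using assms(3)
proof (induction k)
  case 0
  have "shift_game (\<lambda>_. 0) (\<lambda>_. 0) \<circ> \<tau> = \<tau>"
    by (auto simp: shift_game_def fun_eq_iff)
  then show ?case using assms(1) by simp
next
  case (Suc k)
  have step: "poiA k (y k) \<circ> (shift_game (\<lambda>_. 0) (\<lambda>j. if j < k then y j else 0) \<circ> \<tau>)
        \<in> oi_trans n m"
    using Suc.prems assms(2) by (intro oi_trans.oi_A Suc.IH) auto
  have extend: "poiA k (y k) \<circ> shift_game (\<lambda>_. 0) (\<lambda>j. if j < k then y j else 0)
        = shift_game (\<lambda>_. 0) (\<lambda>j. if j < Suc k then y j else 0)"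
    by (auto simp: poiA_eq_shift shift_game_def fun_eq_iff less_Suc_eq)
  show ?case using step unfolding extend[symmetric] comp_assoc .
qed

lemma nonneg_shift_in_oi_trans:
  assumes "\<forall>i<n. x i \<ge> 0" "\<forall>j<m. y j \<ge> 0"
  shows "\<exists>\<tau> \<in> oi_trans n m. \<forall>M. \<forall>i<n. \<forall>j<m. \<tau> M i j = shift_game x y M i j"
proof
  let ?rows = "shift_game (\<lambda>i. if i < n then x i else 0) (\<lambda>_. 0)"
  let ?cols = "shift_game (\<lambda>_. 0) (\<lambda>j. if j < m then y j else 0)"
  have "?rows \<circ> id \<in> oi_trans n m"
    using oi_trans_rows[OF oi_trans.oi_id assms(1) order_refl] .
  then have "?rows \<in> oi_trans n m" by simp
  then show "?cols \<circ> ?rows \<in> oi_trans n m"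
    by (rule oi_trans_cols[OF _ assms(2) order_refl])
  show "\<forall>M. \<forall>i<n. \<forall>j<m. (?cols \<circ> ?rows) M i j = shift_game x y M i j"
    by (simp add: shift_game_def)
qed

lemma bounded_on_lessThan:
  fixes f :: "nat \<Rightarrow> real"
  shows "\<exists>K. \<forall>i<n. f i \<le> K"
proof (intro exI allI impI)
  fix i assume "i < n"
  then have "\<bar>f i\<bar> \<le> (\<Sum>k<n. \<bar>f k\<bar>)"
    by (intro member_le_sum) auto
  then show "f i \<le> (\<Sum>k<n. \<bar>f k\<bar>)" by linarith
qed

lemma obtainable_iff_shift:
  "obtainable_by_OI n m M Mh \<longleftrightarrow>
     (\<exists>x y. \<forall>i<n. \<forall>j<m. Mh i j = shift_game x y M i j)"
proof
  assume "obtainable_by_OI n m M Mh"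
  then obtain \<tau> where \<tau>_oi: "\<tau> \<in> oi_trans n m" and \<tau>: "\<forall>i<n. \<forall>j<m. \<tau> M i j = Mh i j"
    unfolding obtainable_by_OI_def by blast
  obtain x y where "\<tau> = shift_game x y"
    using oi_trans_is_shift[OF \<tau>_oi] by (elim exE)
  with \<tau> have "\<forall>i<n. \<forall>j<m. Mh i j = shift_game x y M i j"
    by simp
  then show "\<exists>x y. \<forall>i<n. \<forall>j<m. Mh i j = shift_game x y M i j"
    by blast
next
  assume "\<exists>x y. \<forall>i<n. \<forall>j<m. Mh i j = shift_game x y M i j"
  then obtain x y where Mh: "\<forall>i<n. \<forall>j<m. Mh i j = shift_game x y M i j" by blast
  obtain Kx where Kx: "\<forall>i<n. - x i \<le> Kx"
    using bounded_on_lessThan[where f = "\<lambda>i. - x i" and n = n] by blast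
  obtain Ky where Ky: "\<forall>j<m. - y j \<le> Ky"
    using bounded_on_lessThan[where f = "\<lambda>j. - y j" and n = m] by blast
  define K where "K = max Kx Ky"
  have "\<forall>i<n. x i + K \<ge> 0" "\<forall>j<m. y j + K \<ge> 0"
    using Kx Ky by (auto simp: K_def)
  from nonneg_shift_in_oi_trans[OF this] obtain \<tau> where "\<tau> \<in> oi_trans n m"
    and \<tau>: "\<forall>M. \<forall>i<n. \<forall>j<m. \<tau> M i j = shift_game x y M i j"
    unfolding shift_game_add_const by blast
  moreover have "\<forall>i<n. \<forall>j<m. \<tau> M i j = Mh i j"
    using \<tau> Mh by simp
  ultimately show "obtainable_by_OI n m M Mh"
    unfolding obtainable_by_OI_def by blast
qed

lemma vanishing_mixed_differences_separable:
  fixes c :: "nat \<Rightarrow> nat \<Rightarrow> real"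
  assumes mixed: "\<forall>i j. i + 1 < n \<longrightarrow> j + 1 < m \<longrightarrow>
                    c i j + c (i+1) (j+1) = c i (j+1) + c (i+1) j"
    and "i < n" "j < m"
  shows "c i j = c i 0 + c 0 j - c 0 0"
proof -
  have row_step: "c (i+1) j - c i j = c (i+1) 0 - c i 0" if "i + 1 < n" "j < m" for i j
    using that(2)
  proof (induction j)
    case (Suc j)
    then show ?case using mixed that(1) by force
  qed simp
  show ?thesis
    using \<open>i < n\<close>
  proof (induction i)
    case (Suc i)
    then show ?case using row_step[of i j] \<open>j < m\<close> by auto
  qed simp
qed

theorem theorem1:
  fixes n m :: nat and M Mh :: game
  defines "c \<equiv> \<lambda>i j. fst (Mh i j) - fst (M i j)"
  shows "obtainable_by_OI n m M Mh \<longleftrightarrow>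
    ((\<forall>i<n. \<forall>j<m. fst (M i j) + snd (M i j) = fst (Mh i j) + snd (Mh i j)) \<and>
     (\<forall>i j. i + 1 < n \<longrightarrow> j + 1 < m \<longrightarrow>
        c i j + c (i+1) (j+1) = c i (j+1) + c (i+1) j))"
  unfolding obtainable_iff_shift
proof safe
  fix x y assume Mh: "\<forall>i<n. \<forall>j<m. Mh i j = shift_game x y M i j"
  show "fst (M i j) + snd (M i j) = fst (Mh i j) + snd (Mh i j)" if "i < n" "j < m" for i j
    using Mh that by (simp add: shift_game_def)
  show "c i j + c (i+1) (j+1) = c i (j+1) + c (i+1) j" if "i + 1 < n" "j + 1 < m" for i j
    using Mh that by (simp add: c_def shift_game_def)
next
  assume C1: "\<forall>i<n. \<forall>j<m. fst (M i j) + snd (M i j) = fst (Mh i j) + snd (Mh i j)"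
    and C2: "\<forall>i j. i + 1 < n \<longrightarrow> j + 1 < m \<longrightarrow>
               c i j + c (i+1) (j+1) = c i (j+1) + c (i+1) j"
  have "Mh i j = shift_game (\<lambda>i. c i 0) (\<lambda>j. c 0 0 - c 0 j) M i j"
    if "i < n" "j < m" for i j
  proof -
    have "fst (M i j) + snd (M i j) = fst (Mh i j) + snd (Mh i j)"
      using C1 that by blast
    with vanishing_mixed_differences_separable[OF C2 that] show ?thesis
      by (simp add: shift_game_def c_def prod_eq_iff)
  qed
  then show "\<exists>x y. \<forall>i<n. \<forall>j<m. Mh i j = shift_game x y M i j" by blast
qed

end
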